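(* Let $n\ge3$, let $\mathcal{M}\subseteq\{1,\dots,n\}$ be a sample set with sampling matrix $A=\mathbf{I}_{\mathcal{M}}$, let $y\in\mathbb{R}^{|\mathcal{M}|}$ (indexed by $\mathcal{M}$) be measurements of the form $y=Az^\diamond+\eta$ with $\|\eta\|_\infty\le\varepsilon$ and $\varepsilon>0$. Let $z\in\mathbb{R}^n$ be feasible for $\min_{z'}\|Dz'\|_1$ subject to $\|Az'-y\|_\infty\le\varepsilon$. Define the active set $\mathcal{A}=\{i\in\mathcal{M}: |y_i-z_i|=\varepsilon\}$, its subsets $\mathcal{A}_\uparrow=\{i\in\mathcal{M}: y_i-z_i=\varepsilon\}$ and $\mathcal{A}_\downarrow=\{i\in\mathcal{M}: y_i-z_i=-\varepsilon\}$, and $\bar{\mathcal{A}}=\mathcal{M}\setminus\mathcal{A}$. Then $z$ is a minimizer of this problem if and only if there exists $u\in\mathbb{R}^{n-2}$ such that $$(D^{\mathsf{T}})_{\overline{\mathcal{M}}\cup\bar{\mathcal{A}}}\,u=\mathbf{0},\quad u_{\mathcal{I}}=\mathrm{sign}(Dz)_{\mathcal{I}},\quad \|u\|_\infty\le1,\quad (D^{\mathsf{T}})_{\mathcal{A}_\uparrow}u\ge\mathbf{0},\quad (D^{\mathsf{T}})_{\mathcal{A}_\downarrow}u\le\mathbf{0},$$ where $\mathcal{I}$ is the set of indices of the nonzero entries of $Dz$ and $\overline{\mathcal{M}}=\{1,\dots,n\}\setminus\mathcal{M}$ (inequalities entrywise).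
   Context: $D\in\mathbb{R}^{(n-2)\times n}$ is the second-order difference operator with $k$-th row having entries $1,-2,1$ in columns $k,k+1,k+2$. $\mathbf{I}_{\mathcal{M}}$ consists of the rows of the identity indexed by $\mathcal{M}$, so $Az=z_{\mathcal{M}}$. For a matrix $M$ and index set $\mathcal{S}$, $M_{\mathcal{S}}$ denotes the rows of $M$ indexed by $\mathcal{S}$; $v_{\mathcal{S}}$ denotes the subvector of $v$. $\mathrm{sign}$ is entrywise with $\mathrm{sign}(0)=0$. *)

theory Defs
  imports Complex_Main
begin

text \<open>Vectors in R^n are functions nat => real, indexed 1..n (1-based as in the paper).
  The second-order difference operator D has rows k = 1..n-2, with entries 1,-2,1
  in columns k, k+1, k+2.\<close>

definition Dent :: "nat \<Rightarrow> nat \<Rightarrow> real" where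
  "Dent k j = (if j = k then 1 else if j = k + 1 then -2 else if j = k + 2 then 1 else 0)"

definition Dmul :: "nat \<Rightarrow> (nat \<Rightarrow> real) \<Rightarrow> nat \<Rightarrow> real" where
  "Dmul n z k = (\<Sum>j = 1..n. Dent k j * z j)"

definition DTmul :: "nat \<Rightarrow> (nat \<Rightarrow> real) \<Rightarrow> nat \<Rightarrow> real" where
  "DTmul n u j = (\<Sum>k = 1..n - 2. Dent k j * u k)"

definition tv_obj :: "nat \<Rightarrow> (nat \<Rightarrow> real) \<Rightarrow> real" where
  "tv_obj n z = (\<Sum>k = 1..n - 2. \<bar>Dmul n z k\<bar>)"

definition feasible :: "nat set \<Rightarrow> (nat \<Rightarrow> real) \<Rightarrow> real \<Rightarrow> (nat \<Rightarrow> real) \<Rightarrow> bool" where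
  "feasible M y \<epsilon> z \<longleftrightarrow> (\<forall>i\<in>M. \<bar>z i - y i\<bar> \<le> \<epsilon>)"

definition is_minimizer :: "nat \<Rightarrow> nat set \<Rightarrow> (nat \<Rightarrow> real) \<Rightarrow> real \<Rightarrow> (nat \<Rightarrow> real) \<Rightarrow> bool" where
  "is_minimizer n M y \<epsilon> z \<longleftrightarrow> feasible M y \<epsilon> z \<and>
     (\<forall>z'. feasible M y \<epsilon> z' \<longrightarrow> tv_obj n z \<le> tv_obj n z')"

end

theory Submission
  imports Defs "HOL-Analysis.Analysis"
begin

text \<open>Sufficiency is weak duality: for a certificate u we have tv z = (u, Dz) and (u, Dz') \<le> tv z'
  for every feasible z', while (u, Dz' - Dz) = (D^T u, z' - z) \<ge> 0 by the sign conditions on D^T u.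

  For necessity, minimality of z says that no direction d respecting the active constraints has a
  negative one-sided directional derivative of the objective. A certificate is obtained by a
  projection argument: among all subgradients u of the l1 norm at Dz choose one that minimises the
  squared distance of D^T u from the cone of sign-admissible vectors. If this distance were positive,
  first-order optimality of u would turn minus the residual into an admissible direction of strict
  descent.\<close>

definition active_up :: "nat set \<Rightarrow> (nat \<Rightarrow> real) \<Rightarrow> real \<Rightarrow> (nat \<Rightarrow> real) \<Rightarrow> nat set" where
  "active_up M y \<epsilon> z = {i\<in>M. y i - z i = \<epsilon>}"

definition active_down :: "nat set \<Rightarrow> (nat \<Rightarrow> real) \<Rightarrow> real \<Rightarrow> (nat \<Rightarrow> real) \<Rightarrow> nat set" where
  "active_down M y \<epsilon> z = {i\<in>M. y i - z i = - \<epsilon>}"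

definition dual_certificate ::
    "nat \<Rightarrow> nat set \<Rightarrow> (nat \<Rightarrow> real) \<Rightarrow> real \<Rightarrow> (nat \<Rightarrow> real) \<Rightarrow> (nat \<Rightarrow> real) \<Rightarrow> bool" where
  "dual_certificate n M y \<epsilon> z u \<longleftrightarrow>
     (\<forall>j\<in>({1..n} - M) \<union> (M - {i\<in>M. \<bar>y i - z i\<bar> = \<epsilon>}). DTmul n u j = 0) \<and>
     (\<forall>k\<in>{k\<in>{1..n - 2}. Dmul n z k \<noteq> 0}. u k = sgn (Dmul n z k)) \<and>
     (\<forall>k\<in>{1..n - 2}. \<bar>u k\<bar> \<le> 1) \<and>
     (\<forall>j\<in>active_up M y \<epsilon> z. 0 \<le> DTmul n u j) \<and>
     (\<forall>j\<in>active_down M y \<epsilon> z. DTmul n u j \<le> 0)"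

lemma sum_mult_Dmul_eq_sum_mult_DTmul:
  "(\<Sum>k = 1..n - 2. u k * Dmul n z k) = (\<Sum>j = 1..n. z j * DTmul n u j)"
  unfolding Dmul_def DTmul_def by (simp add: sum_distrib_left mult_ac, rule sum.swap)

lemma Dmul_add_scaled: "Dmul n (\<lambda>j. a j + t * b j) k = Dmul n a k + t * Dmul n b k"
  unfolding Dmul_def by (simp add: sum.distrib sum_distrib_left algebra_simps)

lemma Dmul_diff: "Dmul n (\<lambda>j. a j - b j) k = Dmul n a k - Dmul n b k"
  unfolding Dmul_def by (simp add: sum_subtractf algebra_simps)

lemma Dmul_uminus: "Dmul n (\<lambda>j. - a j) k = - Dmul n a k"
  unfolding Dmul_def by (simp add: sum_negf)

lemma DTmul_add_scaled: "DTmul n (\<lambda>k. a k + t * b k) j = DTmul n a j + t * DTmul n b j"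
  unfolding DTmul_def by (simp add: sum.distrib sum_distrib_left algebra_simps)

lemma DTmul_diff: "DTmul n (\<lambda>k. a k - b k) j = DTmul n a j - DTmul n b j"
  unfolding DTmul_def by (simp add: sum_subtractf algebra_simps)

section \<open>Weak duality\<close>

lemma minimizer_if_dual_certificate:
  assumes feas: "feasible M y \<epsilon> z" and cert: "dual_certificate n M y \<epsilon> z u"
  shows "is_minimizer n M y \<epsilon> z"
  unfolding is_minimizer_def
proof (intro conjI allI impI feas)
  fix z' assume feas': "feasible M y \<epsilon> z'"
  have "tv_obj n z = (\<Sum>k = 1..n - 2. u k * Dmul n z k)"
  proof (unfold tv_obj_def, intro sum.cong refl)
    fix k assume "k \<in> {1..n - 2}"
    then show "\<bar>Dmul n z k\<bar> = u k * Dmul n z k"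
      using cert by (cases "Dmul n z k = 0") (auto simp: dual_certificate_def sgn_if)
  qed
  also have "\<dots> \<le> (\<Sum>k = 1..n - 2. u k * Dmul n z k) + (\<Sum>j = 1..n. (z' j - z j) * DTmul n u j)"
  proof -
    have "0 \<le> (z' j - z j) * DTmul n u j" if j: "j \<in> {1..n}" for j
    proof -
      consider "j \<in> active_up M y \<epsilon> z" | "j \<in> active_down M y \<epsilon> z"
        | "j \<in> ({1..n} - M) \<union> (M - {i\<in>M. \<bar>y i - z i\<bar> = \<epsilon>})"
        using j by (auto simp: active_up_def active_down_def) linarith
      then show ?thesis
      proof cases
        case 1
        with feas' have "0 \<le> z' j - z j" "0 \<le> DTmul n u j"
          using cert by (auto simp: active_up_def feasible_def dual_certificate_def abs_le_iff)
        then show ?thesis by simp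
      next
        case 2
        with feas' have "z' j - z j \<le> 0" "DTmul n u j \<le> 0"
          using cert by (auto simp: active_down_def feasible_def dual_certificate_def abs_le_iff)
        then show ?thesis by (simp add: mult_nonpos_nonpos)
      next
        case 3
        with cert show ?thesis by (simp add: dual_certificate_def)
      qed
    qed
    then have "0 \<le> (\<Sum>j = 1..n. (z' j - z j) * DTmul n u j)"
      by (rule sum_nonneg)
    then show ?thesis by simp
  qed
  also have "\<dots> = (\<Sum>k = 1..n - 2. u k * Dmul n z' k)"
    using sum_mult_Dmul_eq_sum_mult_DTmul[of u n "\<lambda>j. z' j - z j"]
    by (simp add: Dmul_diff right_diff_distrib sum_subtractf)
  also have "\<dots> \<le> tv_obj n z'"
    unfolding tv_obj_def
  proof (rule sum_mono)
    fix k assume "k \<in> {1..n - 2}"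
    then have "\<bar>u k\<bar> \<le> 1" using cert by (simp add: dual_certificate_def)
    then have "\<bar>u k * Dmul n z' k\<bar> \<le> \<bar>Dmul n z' k\<bar>"
      by (simp add: abs_mult mult_left_le_one_le)
    then show "u k * Dmul n z' k \<le> \<bar>Dmul n z' k\<bar>" by linarith
  qed
  finally show "tv_obj n z \<le> tv_obj n z'" .
qed

section \<open>First-order necessary condition\<close>

definition feasible_direction ::
    "nat set \<Rightarrow> (nat \<Rightarrow> real) \<Rightarrow> real \<Rightarrow> (nat \<Rightarrow> real) \<Rightarrow> (nat \<Rightarrow> real) \<Rightarrow> bool" where
  "feasible_direction M y \<epsilon> z d \<longleftrightarrow>
     (\<forall>i\<in>active_up M y \<epsilon> z. 0 \<le> d i) \<and> (\<forall>i\<in>active_down M y \<epsilon> z. d i \<le> 0)"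

definition tv_dir_deriv :: "nat \<Rightarrow> (nat \<Rightarrow> real) \<Rightarrow> (nat \<Rightarrow> real) \<Rightarrow> real" where
  "tv_dir_deriv n z d =
     (\<Sum>k = 1..n - 2. if Dmul n z k \<noteq> 0 then sgn (Dmul n z k) * Dmul n d k else \<bar>Dmul n d k\<bar>)"

lemma eventually_at_right_0_abs_mult_less:
  fixes b c :: real
  assumes "0 < c"
  shows "\<forall>\<^sub>F t in at_right 0. 0 < t \<and> \<bar>t * b\<bar> < c"
proof -
  have "((\<lambda>t. \<bar>t * b\<bar>) \<longlongrightarrow> 0) (at_right 0)"
    by (intro tendsto_eq_intros) auto
  then have "\<forall>\<^sub>F t in at_right 0. \<bar>t * b\<bar> < c"
    using assms by (rule order_tendstoD)
  with eventually_at_right_less show ?thesis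
    by (rule eventually_conj)
qed

lemma eventually_abs_add_scaled:
  fixes a b :: real
  shows "\<forall>\<^sub>F t in at_right 0.
    \<bar>a + t * b\<bar> = \<bar>a\<bar> + t * (if a \<noteq> 0 then sgn a * b else \<bar>b\<bar>)"
proof (cases "a = 0")
  case True
  show ?thesis
    using eventually_at_right_less[of 0] by (rule eventually_mono) (simp add: True abs_mult)
next
  case False
  then have "\<forall>\<^sub>F t in at_right 0. 0 < t \<and> \<bar>t * b\<bar> < \<bar>a\<bar>"
    by (intro eventually_at_right_0_abs_mult_less) simp
  then show ?thesis
    by (rule eventually_mono) (use False in \<open>auto simp: sgn_if abs_if algebra_simps\<close>)
qed

lemma eventually_tv_obj_add_scaled:
  "\<forall>\<^sub>F t in at_right 0.
     tv_obj n (\<lambda>j. z j + t * d j) = tv_obj n z + t * tv_dir_deriv n z d"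
proof -
  have "\<forall>\<^sub>F t in at_right 0. \<forall>k\<in>{1..n - 2}.
      \<bar>Dmul n z k + t * Dmul n d k\<bar> = \<bar>Dmul n z k\<bar> + t *
        (if Dmul n z k \<noteq> 0 then sgn (Dmul n z k) * Dmul n d k else \<bar>Dmul n d k\<bar>)"
    by (intro eventually_ball_finite ballI eventually_abs_add_scaled) simp
  then show ?thesis
    by (rule eventually_mono)
      (simp add: tv_obj_def tv_dir_deriv_def Dmul_add_scaled sum.distrib sum_distrib_left)
qed

lemma eventually_feasible_add_scaled:
  assumes "finite M" "0 < \<epsilon>" "feasible M y \<epsilon> z" "feasible_direction M y \<epsilon> z d"
  shows "\<forall>\<^sub>F t in at_right 0. feasible M y \<epsilon> (\<lambda>j. z j + t * d j)"
proof -
  have "\<forall>\<^sub>F t in at_right 0. \<bar>z i + t * d i - y i\<bar> \<le> \<epsilon>" if i: "i \<in> M" for i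
  proof (cases "\<bar>z i - y i\<bar> < \<epsilon>")
    case True
    then have "\<forall>\<^sub>F t in at_right 0. 0 < t \<and> \<bar>t * d i\<bar> < \<epsilon> - \<bar>z i - y i\<bar>"
      by (intro eventually_at_right_0_abs_mult_less) simp
    then show ?thesis by (rule eventually_mono) linarith
  next
    case False
    with assms(3) i have "y i - z i = \<epsilon> \<or> y i - z i = - \<epsilon>"
      by (auto simp: feasible_def)
    with assms(4) i have sign: "(y i - z i = \<epsilon> \<and> 0 \<le> d i) \<or> (y i - z i = - \<epsilon> \<and> d i \<le> 0)"
      by (auto simp: feasible_direction_def active_up_def active_down_def)
    have "\<forall>\<^sub>F t in at_right 0. 0 < t \<and> \<bar>t * d i\<bar> < 2 * \<epsilon>"
      using assms(2) by (intro eventually_at_right_0_abs_mult_less) simp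
    then show ?thesis
    proof (rule eventually_mono)
      fix t assume "0 < t \<and> \<bar>t * d i\<bar> < 2 * \<epsilon>"
      moreover have "(0 \<le> d i \<longrightarrow> 0 \<le> t * d i) \<and> (d i \<le> 0 \<longrightarrow> t * d i \<le> 0)" if "0 < t"
        using that by (simp add: mult_nonneg_nonpos)
      ultimately show "\<bar>z i + t * d i - y i\<bar> \<le> \<epsilon>"
        using sign by (auto simp: abs_le_iff)
    qed
  qed
  then show ?thesis
    unfolding feasible_def using assms(1) by (simp add: eventually_ball_finite)
qed

lemma tv_dir_deriv_nonneg_if_minimizer:
  assumes "is_minimizer n M y \<epsilon> z" "finite M" "0 < \<epsilon>" "feasible_direction M y \<epsilon> z d"
  shows "0 \<le> tv_dir_deriv n z d"
proof -
  have "\<forall>\<^sub>F t in at_right 0. 0 < t \<and> feasible M y \<epsilon> (\<lambda>j. z j + t * d j) \<and>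
      tv_obj n (\<lambda>j. z j + t * d j) = tv_obj n z + t * tv_dir_deriv n z d"
    using assms unfolding is_minimizer_def
    by (intro eventually_conj eventually_at_right_less eventually_feasible_add_scaled
        eventually_tv_obj_add_scaled) auto
  then obtain t where t: "0 < t" "feasible M y \<epsilon> (\<lambda>j. z j + t * d j)"
      "tv_obj n (\<lambda>j. z j + t * d j) = tv_obj n z + t * tv_dir_deriv n z d"
    using eventually_happens'[OF trivial_limit_at_right_real] by blast
  with assms(1) have "0 \<le> t * tv_dir_deriv n z d"
    unfolding is_minimizer_def by fastforce
  with \<open>0 < t\<close> show ?thesis
    by (simp add: zero_le_mult_iff)
qed

section \<open>A certificate from the first-order condition\<close>

text \<open>The residual of t with respect to the interval admissible for (D^T u) j:
  [0, \<infinity>) for j \<in> P, (-\<infinity>, 0] for j \<in> Q, and {0} otherwise.\<close>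

definition sign_residual :: "nat set \<Rightarrow> nat set \<Rightarrow> nat \<Rightarrow> real \<Rightarrow> real" where
  "sign_residual P Q j t = (if j \<in> P then min t 0 else if j \<in> Q then max t 0 else t)"

lemma min_add_0_sq_le:
  fixes t d :: real
  shows "(min (t + d) 0)\<^sup>2 \<le> (min t 0 + d)\<^sup>2"
proof (cases "t \<le> 0")
  case True
  then show ?thesis
    by (cases "t + d \<le> 0") (auto simp: min_def)
next
  case t: False
  show ?thesis
  proof (cases "t + d \<le> 0")
    case True
    have "t * (t + 2 * d) \<le> 0"
      using t True by (intro mult_nonneg_nonpos) auto
    then have "(t + d)\<^sup>2 \<le> d\<^sup>2"
      by (simp add: power2_eq_square algebra_simps)
    then show ?thesis
      using t True by (simp add: min_def)
  qed (use t in \<open>simp add: min_def\<close>)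
qed

text \<open>Since t - sign_residual P Q j t is admissible, the distance from t + d to the admissible
  interval is at most the absolute value of sign_residual P Q j t + d.\<close>

lemma sign_residual_add_sq_le:
  "(sign_residual P Q j (t + d))\<^sup>2 \<le> (sign_residual P Q j t + d)\<^sup>2"
proof -
  have "(max (t + d) 0)\<^sup>2 = (min (- t + - d) 0)\<^sup>2"
    by (simp add: max_def min_def power2_commute)
  also have "\<dots> \<le> (min (- t) 0 + - d)\<^sup>2"
    by (rule min_add_0_sq_le)
  also have "\<dots> = (max t 0 + d)\<^sup>2"
    by (simp add: max_def min_def power2_eq_square algebra_simps)
  finally show ?thesis
    using min_add_0_sq_le[of t d] by (simp add: sign_residual_def)
qed

lemma sign_residual_mult_self: "sign_residual P Q j t * t = (sign_residual P Q j t)\<^sup>2"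
  by (simp add: sign_residual_def min_def max_def power2_eq_square)

lemma sign_residual_eq_0_iff:
  "sign_residual P Q j t = 0 \<longleftrightarrow> (if j \<in> P then 0 \<le> t else if j \<in> Q then t \<le> 0 else t = 0)"
  by (auto simp: sign_residual_def min_def max_def)

lemma continuous_on_sign_residual: "continuous_on UNIV (sign_residual P Q j)"
  unfolding sign_residual_def by (cases "j \<in> P"; cases "j \<in> Q")
    (simp_all add: continuous_on_min continuous_on_max continuous_on_id continuous_on_const)

definition l1_subdifferential :: "nat \<Rightarrow> (nat \<Rightarrow> real) \<Rightarrow> (nat \<Rightarrow> real) set" where
  "l1_subdifferential n z =
     (\<Pi>\<^sub>E k\<in>{1..n - 2}. if Dmul n z k \<noteq> 0 then {sgn (Dmul n z k)} else {-1..1})"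

lemma l1_subdifferential_memD:
  assumes "u \<in> l1_subdifferential n z" "k \<in> {1..n - 2}"
  shows "u k \<in> (if Dmul n z k \<noteq> 0 then {sgn (Dmul n z k)} else {-1..1})"
  using assms unfolding l1_subdifferential_def by (rule PiE_mem)

definition dual_residual :: "nat set \<Rightarrow> nat set \<Rightarrow> nat \<Rightarrow> (nat \<Rightarrow> real) \<Rightarrow> real" where
  "dual_residual P Q n u = (\<Sum>j = 1..n. (sign_residual P Q j (DTmul n u j))\<^sup>2)"

lemma continuous_map_DTmul:
  "continuous_map (product_topology (\<lambda>_. euclideanreal) {1..n - 2}) euclideanreal (\<lambda>u. DTmul n u j)"
  unfolding DTmul_def
  by (intro continuous_map_sum continuous_map_real_mult_left continuous_map_product_projection) auto

lemma continuous_map_attains_min_on_PiE: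
  fixes f :: "('a \<Rightarrow> real) \<Rightarrow> real"
  assumes "\<And>k. k \<in> K \<Longrightarrow> compact (B k)" "PiE K B \<noteq> {}"
    and "continuous_map (product_topology (\<lambda>_. euclideanreal) K) euclideanreal f"
  shows "\<exists>u\<in>PiE K B. \<forall>v\<in>PiE K B. f u \<le> f v"
proof -
  have "compactin (product_topology (\<lambda>_. euclideanreal) K) (PiE K B)"
    using assms(1) by (simp add: compactin_PiE)
  then have "compactin euclideanreal (f ` PiE K B)"
    using assms(3) by (rule image_compactin)
  then have "\<exists>m\<in>f ` PiE K B. \<forall>x\<in>f ` PiE K B. m \<le> x"
    using assms(2) by (intro compact_attains_inf) simp_all
  then show ?thesis
    by (auto dest!: bex_imageD ball_imageD)
qed

lemma dual_residual_attains_min: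
  "\<exists>u\<in>l1_subdifferential n z. \<forall>v\<in>l1_subdifferential n z. dual_residual P Q n u \<le> dual_residual P Q n v"
  unfolding l1_subdifferential_def dual_residual_def
proof (rule continuous_map_attains_min_on_PiE)
  show "continuous_map (product_topology (\<lambda>_. euclideanreal) {1..n - 2}) euclideanreal
      (\<lambda>u. \<Sum>j = 1..n. (sign_residual P Q j (DTmul n u j))\<^sup>2)"
    using continuous_map_compose[OF continuous_map_DTmul, of euclideanreal "sign_residual P Q j" n for j]
      continuous_on_sign_residual
    by (intro continuous_map_sum continuous_map_real_pow) (auto simp: o_def)
qed (auto simp: PiE_eq_empty_iff)

lemma nonneg_if_quadratic_lower_bound:
  fixes a c :: real
  assumes "\<And>e. 0 < e \<Longrightarrow> e \<le> 1 \<Longrightarrow> 0 \<le> 2 * e * a + e\<^sup>2 * c"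
  shows "0 \<le> a"
proof -
  have "\<forall>\<^sub>F e in at_right 0. 0 \<le> 2 * a + e * c"
    unfolding eventually_at_right_field
  proof (intro exI[of _ 1] conjI allI impI)
    fix e :: real assume "0 < e" "e < 1"
    then have "0 \<le> e * (2 * a + e * c)"
      using assms[of e] by (simp add: power2_eq_square algebra_simps)
    with \<open>0 < e\<close> show "0 \<le> 2 * a + e * c"
      by (simp add: zero_le_mult_iff)
  qed simp
  moreover have "((\<lambda>e. 2 * a + e * c) \<longlongrightarrow> 2 * a) (at_right 0)"
    by (intro tendsto_eq_intros) auto
  ultimately have "0 \<le> 2 * a"
    using tendsto_lowerbound by (metis trivial_limit_at_right_real)
  then show ?thesis by simp
qed

lemma DTmul_restrict: "DTmul n (restrict u {1..n - 2}) j = DTmul n u j"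
  unfolding DTmul_def by simp

lemma l1_subdifferential_segment:
  assumes "u \<in> l1_subdifferential n z" "v \<in> l1_subdifferential n z" "0 \<le> e" "e \<le> 1"
  shows "restrict (\<lambda>k. u k + e * (v k - u k)) {1..n - 2} \<in> l1_subdifferential n z"
  unfolding l1_subdifferential_def restrict_PiE_iff
proof
  fix k assume k: "k \<in> {1..n - 2}"
  define B where "B = (if Dmul n z k \<noteq> 0 then {sgn (Dmul n z k)} else {-1..1::real})"
  have "u k \<in> B" "v k \<in> B"
    using l1_subdifferential_memD[OF assms(1) k] l1_subdifferential_memD[OF assms(2) k]
    by (simp_all only: B_def)
  moreover have "convex B"
    by (simp add: B_def)
  ultimately have "(1 - e) *\<^sub>R u k + e *\<^sub>R v k \<in> B"
    using assms(3,4) by (intro convexD_alt)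
  then show "u k + e * (v k - u k) \<in> B"
    by (simp add: algebra_simps)
qed

lemma dual_residual_variational_ineq:
  assumes u: "u \<in> l1_subdifferential n z"
    and umin: "\<forall>w\<in>l1_subdifferential n z. dual_residual P Q n u \<le> dual_residual P Q n w"
    and v: "v \<in> l1_subdifferential n z"
  defines "r \<equiv> \<lambda>j. sign_residual P Q j (DTmul n u j)"
  shows "(\<Sum>k = 1..n - 2. u k * Dmul n r k) \<le> (\<Sum>k = 1..n - 2. v k * Dmul n r k)"
proof -
  define \<Delta> where "\<Delta> j = DTmul n (\<lambda>k. v k - u k) j" for j
  define a where "a = (\<Sum>j = 1..n. r j * \<Delta> j)"
  define c where "c = (\<Sum>j = 1..n. (\<Delta> j)\<^sup>2)"
  have "0 \<le> 2 * e * a + e\<^sup>2 * c" if e: "0 < e" "e \<le> 1" for e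
  proof -
    define w where "w = restrict (\<lambda>k. u k + e * (v k - u k)) {1..n - 2}"
    have "dual_residual P Q n u \<le> dual_residual P Q n w"
      using umin l1_subdifferential_segment[OF u v] e by (simp add: w_def)
    also have "\<dots> = (\<Sum>j = 1..n. (sign_residual P Q j (DTmul n u j + e * \<Delta> j))\<^sup>2)"
      unfolding dual_residual_def w_def DTmul_restrict DTmul_add_scaled \<Delta>_def ..
    also have "\<dots> \<le> (\<Sum>j = 1..n. (r j + e * \<Delta> j)\<^sup>2)"
      unfolding r_def by (intro sum_mono sign_residual_add_sq_le)
    also have "\<dots> = (\<Sum>j = 1..n. (r j)\<^sup>2 + 2 * e * (r j * \<Delta> j) + e\<^sup>2 * (\<Delta> j)\<^sup>2)"
      by (simp add: power2_eq_square algebra_simps)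
    also have "\<dots> = dual_residual P Q n u + 2 * e * a + e\<^sup>2 * c"
      by (simp add: dual_residual_def a_def c_def r_def sum.distrib sum_distrib_left)
    finally show ?thesis by simp
  qed
  then have "0 \<le> a"
    by (rule nonneg_if_quadratic_lower_bound)
  also have "a = (\<Sum>k = 1..n - 2. v k * Dmul n r k) - (\<Sum>k = 1..n - 2. u k * Dmul n r k)"
    unfolding a_def \<Delta>_def sum_mult_Dmul_eq_sum_mult_DTmul
    by (simp add: DTmul_diff right_diff_distrib sum_subtractf mult.commute)
  finally show ?thesis by simp
qed

lemma dual_certificate_if_dual_residual_eq_0:
  assumes M: "M \<subseteq> {1..n}" and \<epsilon>: "0 < \<epsilon>" and u: "u \<in> l1_subdifferential n z"
    and res0: "dual_residual (active_up M y \<epsilon> z) (active_down M y \<epsilon> z) n u = 0"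
  shows "dual_certificate n M y \<epsilon> z u"
proof -
  let ?P = "active_up M y \<epsilon> z" and ?Q = "active_down M y \<epsilon> z"
  have disjoint: "?P \<inter> ?Q = {}"
    using \<epsilon> by (auto simp: active_up_def active_down_def)
  have res: "if j \<in> ?P then 0 \<le> DTmul n u j else if j \<in> ?Q then DTmul n u j \<le> 0
      else DTmul n u j = 0" if "j \<in> {1..n}" for j
    using res0 that by (simp add: dual_residual_def sum_nonneg_eq_0_iff sign_residual_eq_0_iff)
  from l1_subdifferential_memD[OF u]
  have sign_u: "\<forall>k\<in>{k\<in>{1..n - 2}. Dmul n z k \<noteq> 0}. u k = sgn (Dmul n z k)"
    and bound_u: "\<forall>k\<in>{1..n - 2}. \<bar>u k\<bar> \<le> 1"
    by (fastforce simp: abs_le_iff sgn_if split: if_splits)+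
  show ?thesis
    unfolding dual_certificate_def
  proof (intro conjI sign_u bound_u ballI)
    fix j assume "j \<in> ({1..n} - M) \<union> (M - {i\<in>M. \<bar>y i - z i\<bar> = \<epsilon>})"
    with M \<epsilon> have "j \<in> {1..n}" "j \<notin> ?P" "j \<notin> ?Q"
      by (auto simp: active_up_def active_down_def)
    with res[of j] show "DTmul n u j = 0"
      by simp
  next
    fix j assume "j \<in> ?P"
    with M res[of j] show "0 \<le> DTmul n u j"
      by (auto simp: active_up_def)
  next
    fix j assume "j \<in> ?Q"
    with M disjoint have "j \<in> {1..n}" "j \<notin> ?P"
      by (auto simp: active_down_def)
    with res[of j] \<open>j \<in> ?Q\<close> show "DTmul n u j \<le> 0"
      by simp
  qed
qed

lemma dual_certificate_if_tv_dir_deriv_nonneg: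
  assumes M: "M \<subseteq> {1..n}" and \<epsilon>: "0 < \<epsilon>"
    and no_descent: "\<And>d. feasible_direction M y \<epsilon> z d \<Longrightarrow> 0 \<le> tv_dir_deriv n z d"
  shows "\<exists>u. dual_certificate n M y \<epsilon> z u"
proof -
  let ?P = "active_up M y \<epsilon> z" and ?Q = "active_down M y \<epsilon> z"
  obtain u where u: "u \<in> l1_subdifferential n z"
    and umin: "\<forall>w\<in>l1_subdifferential n z. dual_residual ?P ?Q n u \<le> dual_residual ?P ?Q n w"
    using dual_residual_attains_min by blast
  have "dual_residual ?P ?Q n u = 0"
  proof (rule ccontr)
    assume "dual_residual ?P ?Q n u \<noteq> 0"
    define r where "r = (\<lambda>j. sign_residual ?P ?Q j (DTmul n u j))"
    have "0 < dual_residual ?P ?Q n u"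
      using \<open>dual_residual ?P ?Q n u \<noteq> 0\<close>
      by (simp add: dual_residual_def sum_nonneg order_le_neq_trans)
    also have "dual_residual ?P ?Q n u = (\<Sum>k = 1..n - 2. u k * Dmul n r k)"
      unfolding sum_mult_Dmul_eq_sum_mult_DTmul dual_residual_def r_def
      by (simp add: sign_residual_mult_self)
    finally have pos: "0 < (\<Sum>k = 1..n - 2. u k * Dmul n r k)" .
    \<comment> \<open>v is the subgradient that realises the directional derivative in direction -r\<close>
    define v where "v = restrict
      (\<lambda>k. if Dmul n z k \<noteq> 0 then sgn (Dmul n z k) else - sgn (Dmul n r k)) {1..n - 2}"
    have v: "v \<in> l1_subdifferential n z"
      by (auto simp: v_def l1_subdifferential_def sgn_if)
    have "?P \<inter> ?Q = {}"
      using \<epsilon> by (auto simp: active_up_def active_down_def)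
    then have "feasible_direction M y \<epsilon> z (\<lambda>j. - r j)"
      by (auto simp: feasible_direction_def r_def sign_residual_def)
    then have "0 \<le> tv_dir_deriv n z (\<lambda>j. - r j)"
      by (rule no_descent)
    also have "tv_dir_deriv n z (\<lambda>j. - r j) = - (\<Sum>k = 1..n - 2. v k * Dmul n r k)"
      unfolding tv_dir_deriv_def Dmul_uminus sum_negf[symmetric]
      by (intro sum.cong) (auto simp: v_def sgn_if)
    also have "\<dots> \<le> - (\<Sum>k = 1..n - 2. u k * Dmul n r k)"
      using dual_residual_variational_ineq[OF u umin v] by (simp add: r_def)
    finally show False
      using pos by simp
  qed
  with M \<epsilon> u show ?thesis
    by (blast intro: dual_certificate_if_dual_residual_eq_0)
qed

theorem proposition7:
  fixes n :: nat and M :: "nat set" and y zd eta z :: "nat \<Rightarrow> real" and \<epsilon> :: real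
  assumes "n \<ge> 3"
    and "M \<subseteq> {1..n}"
    and "\<forall>i\<in>M. y i = zd i + eta i"
    and "\<forall>i\<in>M. \<bar>eta i\<bar> \<le> \<epsilon>"
    and "\<epsilon> > 0"
    and "feasible M y \<epsilon> z"
  shows "is_minimizer n M y \<epsilon> z \<longleftrightarrow>
    (let Act = {i\<in>M. \<bar>y i - z i\<bar> = \<epsilon>};
         Aup = {i\<in>M. y i - z i = \<epsilon>};
         Adown = {i\<in>M. y i - z i = - \<epsilon>};
         Abar = M - Act;
         Mbar = {1..n} - M;
         I = {k\<in>{1..n - 2}. Dmul n z k \<noteq> 0}
     in \<exists>u :: nat \<Rightarrow> real.
          (\<forall>j\<in>Mbar \<union> Abar. DTmul n u j = 0) \<and>
          (\<forall>k\<in>I. u k = sgn (Dmul n z k)) \<and>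
          (\<forall>k\<in>{1..n - 2}. \<bar>u k\<bar> \<le> 1) \<and>
          (\<forall>j\<in>Aup. DTmul n u j \<ge> 0) \<and>
          (\<forall>j\<in>Adown. DTmul n u j \<le> 0))"
  \<comment> \<open>The noise model for y (the hypotheses on zd and eta) only guarantees that the problem
    is feasible.\<close>
proof -
  have "finite M"
    using assms(2) finite_subset by blast
  have "is_minimizer n M y \<epsilon> z \<longleftrightarrow> (\<exists>u. dual_certificate n M y \<epsilon> z u)"
  proof
    assume min: "is_minimizer n M y \<epsilon> z"
    have "0 \<le> tv_dir_deriv n z d" if "feasible_direction M y \<epsilon> z d" for d
      using min \<open>finite M\<close> assms(5) that by (rule tv_dir_deriv_nonneg_if_minimizer)
    with assms(2,5) show "\<exists>u. dual_certificate n M y \<epsilon> z u"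
      by (rule dual_certificate_if_tv_dir_deriv_nonneg)
  next
    assume "\<exists>u. dual_certificate n M y \<epsilon> z u"
    with assms(6) show "is_minimizer n M y \<epsilon> z"
      by (blast intro: minimizer_if_dual_certificate)
  qed
  then show ?thesis
    by (simp add: Let_def dual_certificate_def active_up_def active_down_def)
qed

end
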